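(* Let $M$ be a universal left-c.e. semi-measure and let $\mathcal S$ be the collection of all left-c.e. semi-measures. Then $\mathsf{MLR}_M=\bigcup_{\rho\in\mathcal S}\mathsf{MLR}_\rho$.
   Context: $2^{<\omega}$ is the set of finite binary strings, $\varepsilon$ the empty string, $[\![\sigma]\!]=\{X\in2^\omega:\sigma\preceq X\}$, $[\![S]\!]=\bigcup_{\sigma\in S}[\![\sigma]\!]$. A semi-measure is $\rho:2^{<\omega}\to[0,1]$ with $\rho(\varepsilon)=1$ and $\rho(\sigma)\ge\rho(\sigma0)+\rho(\sigma1)$; it is left-c.e. if its values are uniformly approximable from below by a computable, non-decreasing sequence of rationals. A left-c.e. semi-measure $M$ is universal if for every left-c.e. semi-measure $\rho$ there is $c\in\omega$ with $\rho(\sigma)\le c\cdot M(\sigma)$ for all $\sigma$. For $E\subseteq2^{<\omega}$, $\rho(E)=\sum_{\sigma\in E}\rho(\sigma)$. A $\rho$-Martin-Löf test is a uniformly c.e. sequence $(U_i)$ of subsets of $2^{<\omega}$ with $\rho(U_i)\le2^{-i}$; $X\in\mathsf{MLR}_\rho$ iff $X\notin\bigcap_i[\![U_i]\!]$ for every such test. *)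

theory Defs
  imports "HOL-Analysis.Analysis" "HOL-Library.Nat_Bijection"
begin

datatype recf = Zero | Succ | Proj nat | Comp recf "recf list"
  | PrimRec recf recf | Minim recf

inductive eval :: "recf \<Rightarrow> nat list \<Rightarrow> nat \<Rightarrow> bool" where
  eval_Zero: "eval Zero xs 0"
| eval_Succ: "eval Succ (x # xs) (Suc x)"
| eval_Proj: "i < length xs \<Longrightarrow> eval (Proj i) xs (xs ! i)"
| eval_Comp: "list_all2 (\<lambda>g y. eval g xs y) gs ys \<Longrightarrow> eval f ys z \<Longrightarrow> eval (Comp f gs) xs z"
| eval_PR0: "eval g xs y \<Longrightarrow> eval (PrimRec g h) (0 # xs) y"
| eval_PRS: "eval (PrimRec g h) (n # xs) y \<Longrightarrow> eval h (n # y # xs) z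
               \<Longrightarrow> eval (PrimRec g h) (Suc n # xs) z"
| eval_Minim: "eval f (n # xs) 0 \<Longrightarrow> (\<forall>m<n. \<exists>y. eval f (m # xs) (Suc y))
               \<Longrightarrow> eval (Minim f) xs n"

text \<open>Finite binary strings are bool lists (False = 0, True = 1); the
  bijective coding of strings by natural numbers.\<close>
fun str_code :: "bool list \<Rightarrow> nat" where
  "str_code [] = 0"
| "str_code (b # bs) = 2 * str_code bs + (if b then 2 else 1)"

definition rat_decode :: "nat \<Rightarrow> rat" where
  "rat_decode n = (case prod_decode n of (a, b) \<Rightarrow> of_int (int_decode a) / of_nat (Suc b))"

definition semimeasure :: "(bool list \<Rightarrow> real) \<Rightarrow> bool" where
  "semimeasure \<rho> \<longleftrightarrow> (\<forall>\<sigma>. 0 \<le> \<rho> \<sigma> \<and> \<rho> \<sigma> \<le> 1) \<and> \<rho> [] = 1 \<and>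
     (\<forall>\<sigma>. \<rho> (\<sigma> @ [False]) + \<rho> (\<sigma> @ [True]) \<le> \<rho> \<sigma>)"

definition computable_approx :: "(bool list \<Rightarrow> nat \<Rightarrow> rat) \<Rightarrow> bool" where
  "computable_approx q \<longleftrightarrow> (\<exists>r. \<forall>\<sigma> s. \<exists>y. eval r [str_code \<sigma>, s] y \<and> q \<sigma> s = rat_decode y)"

definition left_ce :: "(bool list \<Rightarrow> real) \<Rightarrow> bool" where
  "left_ce \<rho> \<longleftrightarrow> (\<exists>q. computable_approx q \<and> (\<forall>\<sigma>. mono (q \<sigma>)) \<and>
      (\<forall>\<sigma>. (\<lambda>s. real_of_rat (q \<sigma> s)) \<longlonglongrightarrow> \<rho> \<sigma>))"

definition left_ce_semimeasure :: "(bool list \<Rightarrow> real) \<Rightarrow> bool" where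
  "left_ce_semimeasure \<rho> \<longleftrightarrow> semimeasure \<rho> \<and> left_ce \<rho>"

definition universal :: "(bool list \<Rightarrow> real) \<Rightarrow> bool" where
  "universal M \<longleftrightarrow> left_ce_semimeasure M \<and>
     (\<forall>\<rho>. left_ce_semimeasure \<rho> \<longrightarrow> (\<exists>c::nat. \<forall>\<sigma>. \<rho> \<sigma> \<le> real c * M \<sigma>))"

definition prefix_of :: "bool list \<Rightarrow> (nat \<Rightarrow> bool) \<Rightarrow> bool" where
  "prefix_of \<sigma> X \<longleftrightarrow> (\<forall>i < length \<sigma>. \<sigma> ! i = X i)"

definition cyl :: "bool list set \<Rightarrow> (nat \<Rightarrow> bool) set" where
  "cyl S = {X. \<exists>\<sigma>\<in>S. prefix_of \<sigma> X}"

definition weight :: "(bool list \<Rightarrow> real) \<Rightarrow> bool list set \<Rightarrow> ennreal" where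
  "weight \<rho> E = (\<Sum>\<^sub>\<infinity>\<sigma>\<in>E. ennreal (\<rho> \<sigma>))"

definition unif_ce :: "(nat \<Rightarrow> bool list set) \<Rightarrow> bool" where
  "unif_ce U \<longleftrightarrow> (\<exists>r. \<forall>i \<sigma>. \<sigma> \<in> U i \<longleftrightarrow> (\<exists>y. eval r [i, str_code \<sigma>] y))"

definition martin_loef_test :: "(bool list \<Rightarrow> real) \<Rightarrow> (nat \<Rightarrow> bool list set) \<Rightarrow> bool" where
  "martin_loef_test \<rho> U \<longleftrightarrow> unif_ce U \<and> (\<forall>i. weight \<rho> (U i) \<le> ennreal ((1/2) ^ i))"

definition MLR :: "(bool list \<Rightarrow> real) \<Rightarrow> (nat \<Rightarrow> bool) set" where
  "MLR \<rho> = {X. \<forall>U. martin_loef_test \<rho> U \<longrightarrow> X \<notin> (\<Inter>i. cyl (U i))}"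

end

theory Submission
  imports Defs
begin

text \<open>One inclusion holds because M is itself a left-c.e. semi-measure. For the other, universality
  gives \<open>\<rho> \<le> c \<cdot> M\<close>; since \<open>c \<le> 2\<^sup>c\<close>, dropping the first c levels of an M-test yields a
  \<open>\<rho>\<close>-test, and this does not enlarge the intersection of the levels.\<close>

fun add_const :: "nat \<Rightarrow> recf" where
  "add_const 0 = Proj 0"
| "add_const (Suc k) = Comp Succ [add_const k]"

lemma eval_add_const: "eval (add_const k) [i, s] y \<longleftrightarrow> y = i + k"
proof (induction k arbitrary: y)
  case 0
  show ?case
    by (auto elim: eval.cases intro: eval_Proj[of 0 "[i, s]", simplified])
next
  case (Suc k)
  show ?case
  proof
    assume "eval (add_const (Suc k)) [i, s] y"
    then obtain ys where "list_all2 (\<lambda>g y. eval g [i, s] y) [add_const k] ys" "eval Succ ys y"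
      by (auto elim: eval.cases)
    then show "y = i + Suc k"
      using Suc by (auto simp: list_all2_Cons1 elim: eval.cases)
  next
    assume "y = i + Suc k"
    then show "eval (add_const (Suc k)) [i, s] y"
      using Suc by (auto intro!: eval_Comp[where ys = "[i + k]"] eval_Succ[of _ "[]", simplified])
  qed
qed

lemma eval_Comp_shift_first:
  "eval (Comp r [add_const k, Proj 1]) [i, s] y \<longleftrightarrow> eval r [i + k, s] y"
proof
  assume "eval (Comp r [add_const k, Proj 1]) [i, s] y"
  then obtain ys where ys: "list_all2 (\<lambda>g y. eval g [i, s] y) [add_const k, Proj 1] ys" "eval r ys y"
    by (auto elim: eval.cases)
  then have "ys = [i + k, s]"
    by (auto simp: list_all2_Cons1 eval_add_const elim: eval.cases)
  with ys show "eval r [i + k, s] y" by simp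
next
  assume "eval r [i + k, s] y"
  then show "eval (Comp r [add_const k, Proj 1]) [i, s] y"
    by (auto simp: eval_add_const
        intro!: eval_Comp[where ys = "[i + k, s]"] eval_Proj[of 1 "[i, s]", simplified])
qed

lemma unif_ce_shift: "unif_ce U \<Longrightarrow> unif_ce (\<lambda>i. U (i + k))"
  unfolding unif_ce_def using eval_Comp_shift_first by metis

lemma infsum_cmult_right_ennreal:
  fixes f :: "'a \<Rightarrow> ennreal"
  shows "(\<Sum>\<^sub>\<infinity>x\<in>A. c * f x) = c * (\<Sum>\<^sub>\<infinity>x\<in>A. f x)"
  by (simp add: nonneg_infsum_complete SUP_mult_left_ennreal sum_distrib_left)

lemma weight_le_cmult:
  assumes "\<And>\<sigma>. \<rho> \<sigma> \<le> c * M \<sigma>" and "0 \<le> c"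
  shows "weight \<rho> E \<le> ennreal c * weight M E"
proof -
  have "weight \<rho> E \<le> (\<Sum>\<^sub>\<infinity>\<sigma>\<in>E. ennreal c * ennreal (M \<sigma>))"
    unfolding weight_def using assms
    by (intro infsum_mono nonneg_summable_on_complete)
       (auto simp: ennreal_mult'[symmetric] intro: ennreal_leI)
  also have "\<dots> = ennreal c * weight M E"
    unfolding weight_def by (rule infsum_cmult_right_ennreal)
  finally show ?thesis .
qed

lemma of_nat_mult_half_power_le_1: "real c * (1/2) ^ c \<le> 1"
proof -
  have "real c \<le> 2 ^ c"
    using less_exp[of c] by (metis of_nat_le_iff less_imp_le of_nat_numeral of_nat_power)
  then show ?thesis by (simp add: power_one_over divide_simps)
qed

lemma martin_loef_test_shift_dominated:
  assumes dom: "\<And>\<sigma>. \<rho> \<sigma> \<le> real c * M \<sigma>" and U: "martin_loef_test M U"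
  shows "martin_loef_test \<rho> (\<lambda>i. U (i + c))"
  unfolding martin_loef_test_def
proof (intro conjI allI)
  show "unif_ce (\<lambda>i. U (i + c))"
    using U unif_ce_shift unfolding martin_loef_test_def by blast
next
  fix i
  have "weight \<rho> (U (i + c)) \<le> ennreal (real c) * weight M (U (i + c))"
    using dom by (rule weight_le_cmult) simp
  also have "\<dots> \<le> ennreal (real c) * ennreal ((1/2) ^ (i + c))"
    using U unfolding martin_loef_test_def by (intro mult_left_mono) auto
  also have "\<dots> = ennreal (real c * (1/2) ^ c * (1/2) ^ i)"
    by (simp add: ennreal_mult'[symmetric] power_add mult_ac)
  also have "\<dots> \<le> ennreal ((1/2) ^ i)"
    using of_nat_mult_half_power_le_1[of c] by (intro ennreal_leI) (simp add: mult_le_one)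
  finally show "weight \<rho> (U (i + c)) \<le> ennreal ((1/2) ^ i)" .
qed

lemma MLR_subset_of_dominated:
  assumes "\<And>\<sigma>. \<rho> \<sigma> \<le> real c * M \<sigma>"
  shows "MLR \<rho> \<subseteq> MLR M"
proof
  fix X assume X: "X \<in> MLR \<rho>"
  show "X \<in> MLR M"
    unfolding MLR_def
  proof (intro CollectI allI impI)
    fix U assume "martin_loef_test M U"
    then have "martin_loef_test \<rho> (\<lambda>i. U (i + c))"
      by (rule martin_loef_test_shift_dominated[OF assms])
    with X have "X \<notin> (\<Inter>i. cyl (U (i + c)))"
      unfolding MLR_def by blast
    then show "X \<notin> (\<Inter>i. cyl (U i))" by blast
  qed
qed

theorem proposition5p2:
  assumes "universal M"
  shows "MLR M = (\<Union>\<rho>\<in>{\<rho>. left_ce_semimeasure \<rho>}. MLR \<rho>)"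
proof
  show "MLR M \<subseteq> (\<Union>\<rho>\<in>{\<rho>. left_ce_semimeasure \<rho>}. MLR \<rho>)"
    using assms unfolding universal_def by blast
  show "(\<Union>\<rho>\<in>{\<rho>. left_ce_semimeasure \<rho>}. MLR \<rho>) \<subseteq> MLR M"
  proof (rule UN_least)
    fix \<rho> assume "\<rho> \<in> {\<rho>. left_ce_semimeasure \<rho>}"
    then obtain c :: nat where "\<And>\<sigma>. \<rho> \<sigma> \<le> real c * M \<sigma>"
      using assms unfolding universal_def by blast
    then show "MLR \<rho> \<subseteq> MLR M" by (rule MLR_subset_of_dominated)
  qed
qed

end
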